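(* Let \(\mathbf{m}_i =\left(\langle x_0^{(k)}\, x_1^{(\ell)}\rangle_i\;|\;(k,\ell) \in \mathcal{E}\right)\) be a message encoding vector with unnormalized associated message encoding state \[\sigma_{\mathbf{m}_i}=\sum_{k<\ell}|B_{\langle x_0^{(k)} x_1^{(\ell)}\rangle_i}\rangle\langle B_{\langle x_0^{(k)} x_1^{(\ell)}\rangle_i}|_{k,\ell}\otimes \mathds{1}_{[N]\backslash {\{k,\ell\}}}.\] Then the largest eigenvalue satisfies \[\lambda_{\textup{max}}(\sigma_{\mathbf{m}_{i}})\leq \frac{N^2}{4} +\frac{N}{4}-\frac{1}{2}.\]
   Context: Consider an \(N\)-qubit register with sites indexed by \([N]=\{1,\dots,N\}\). The index-encoding set is \(\mathcal{E}=\{(k,\ell): k,\ell\in[N],\ k<\ell\}\), so \(|\mathcal{E}|=N(N-1)/2\). Messages are \(x=x_0x_1\in X=\{00,01,10,11\}\). A message encoding vector \(\mathbf{m}_i\in X^{\mathcal{E}}\) assigns to each pair \((k,\ell)\in\mathcal{E}\) a two-bit message, denoted \(\langle x_0^{(k)} x_1^{(\ell)}\rangle_i\). The two-qubit Bell states are \(|B_{xy}\rangle=\frac{1}{\sqrt{2}}(|0y\rangle+(-1)^x|1\bar y\rangle)\) for \(x,y\in\{0,1\}\), with \(\bar y\) the negation of \(y\). In the sum, \(|B\rangle\langle B|_{k,\ell}\) acts on qubits \(k\) and \(\ell\), and \(\mathds{1}_{[N]\backslash\{k,\ell\}}\) is the identity on all remaining qubits of the register. *)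

theory Defs
  imports Complex_Main "Jordan_Normal_Form.Char_Poly"
begin

text \<open>Computational basis of the N-qubit register: basis index a < 2^N; the value of
qubit j (j in {1..N}) in basis state a is bit (j-1) of a.\<close>

definition qubit :: "nat \<Rightarrow> nat \<Rightarrow> bool" where
  "qubit a j = bit a (j - 1)"

definition enc_set :: "nat \<Rightarrow> (nat \<times> nat) set" where
  "enc_set N = {(k, l). 1 \<le> k \<and> k < l \<and> l \<le> N}"

text \<open>Amplitude of the Bell state |B_xy> = (|0 y> + (-1)^x |1 (not y)>)/sqrt 2
  at the two-qubit basis state |u v>.\<close>
definition bell_amp :: "bool \<Rightarrow> bool \<Rightarrow> bool \<Rightarrow> bool \<Rightarrow> complex" where
  "bell_amp x y u v =
     (if \<not> u \<and> v = y then 1 / of_real (sqrt 2)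
      else if u \<and> v = (\<not> y) then (if x then -1 else 1) / of_real (sqrt 2)
      else 0)"

text \<open>Matrix entry (a,b) of |B_xy><B_xy|_{k,l} \<otimes> 1_{[N]\{k,l}}.\<close>
definition bell_proj_entry :: "nat \<Rightarrow> nat \<Rightarrow> nat \<Rightarrow> bool \<times> bool \<Rightarrow> nat \<Rightarrow> nat \<Rightarrow> complex" where
  "bell_proj_entry N k l xy a b =
     (if (\<forall>j \<in> {1..N} - {k, l}. qubit a j = qubit b j)
      then bell_amp (fst xy) (snd xy) (qubit a k) (qubit a l)
           * cnj (bell_amp (fst xy) (snd xy) (qubit b k) (qubit b l))
      else 0)"

text \<open>Unnormalized message encoding state sigma_m for a message encoding vector
  m : E -> {00,01,10,11}, message x0x1 encoded as the pair (x0,x1) of booleans.\<close>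
definition sigma_m :: "nat \<Rightarrow> (nat \<times> nat \<Rightarrow> bool \<times> bool) \<Rightarrow> complex mat" where
  "sigma_m N m = mat (2 ^ N) (2 ^ N)
     (\<lambda>(a, b). \<Sum>(k, l) \<in> enc_set N. bell_proj_entry N k l (m (k, l)) a b)"

text \<open>Largest eigenvalue of a (Hermitian) matrix: its eigenvalues are real.\<close>
definition lambda_max :: "complex mat \<Rightarrow> real" where
  "lambda_max A = Max (Re ` {ev. eigenvalue A ev})"

end

theory Submission
  imports Defs "Jordan_Normal_Form.Spectral_Radius"
begin

text \<open>On the basis states whose qubits \<open>k\<close> and \<open>l\<close> have the parity prescribed by the message,
  the Bell projector of the pair \<open>k < l\<close> has entries of modulus \<open>1/2\<close> linking a state \<open>a\<close> only
  to itself and to \<open>a\<close> with both qubits flipped; elsewhere it vanishes. So for an eigenvector \<open>v\<close>,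
  \<open>|\<lambda>| \<Sum> |v\<^sub>a|\<^sup>2\<close> is bounded by a nonnegative quadratic form in \<open>|v|\<close>, which we estimate by a
  weighted Schur test. Let \<open>d\<^sub>k(a)\<close> count the partners \<open>j\<close> of \<open>k\<close> whose pair is matched at \<open>a\<close>;
  flipping a matched pair \<open>{k, l}\<close> turns \<open>d\<^sub>k\<close> into \<open>N - d\<^sub>k\<close>. With weights averaging
  \<open>d\<^sub>k(b)/d\<^sub>k(a)\<close> and \<open>d\<^sub>l(b)/d\<^sub>l(a)\<close>, the pair \<open>{k, l}\<close> contributes
  \<open>N/4 (1/d\<^sub>k(a) + 1/d\<^sub>l(a))\<close> to the row sum at a matched state \<open>a\<close>, and summing over all pairs
  gives at most \<open>N\<^sup>2/4\<close>, which is already below the claimed bound.\<close>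

lemma two_mult_le_weighted_squares:
  fixes r r' x y :: real
  assumes "0 < r" "0 < r'" "1 \<le> r * r'"
  shows "2 * x * y \<le> r * x ^ 2 + r' * y ^ 2"
proof -
  have "0 \<le> r * (x - y / r) ^ 2" using assms by simp
  also have "\<dots> = r * x ^ 2 - 2 * x * y + y ^ 2 / r"
    using assms by (simp add: power2_eq_square field_simps)
  finally have "2 * x * y \<le> r * x ^ 2 + y ^ 2 / r" by simp
  moreover have "y ^ 2 \<le> r * r' * y ^ 2"
    using mult_right_mono[OF assms(3), of "y ^ 2"] by simp
  then have "y ^ 2 / r \<le> r' * y ^ 2"
    using assms(1) by (simp add: pos_divide_le_eq ac_simps)
  ultimately show ?thesis by simp
qed

lemma four_le_add_mult_inverse_add:
  fixes a b :: real
  assumes "0 < a" "0 < b"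
  shows "4 \<le> (a + b) * (inverse a + inverse b)"
proof -
  have "(a + b) * (inverse a + inverse b) - 4 = (a - b) ^ 2 / (a * b)"
    using assms by (simp add: field_simps power2_eq_square)
  also have "\<dots> \<ge> 0" using assms by simp
  finally show ?thesis by simp
qed

text \<open>Weighted Schur test: AM-GM with the weights \<open>R a b\<close> and \<open>R b a\<close> on each term, then symmetry
  of \<open>Q\<close> moves everything onto the diagonal.\<close>
lemma quadratic_form_le_weighted_row_sums:
  fixes Q R :: "'a \<Rightarrow> 'a \<Rightarrow> real" and x :: "'a \<Rightarrow> real"
  assumes "finite S"
    and sym: "\<And>a b. a \<in> S \<Longrightarrow> b \<in> S \<Longrightarrow> Q a b = Q b a"
    and nonneg: "\<And>a b. a \<in> S \<Longrightarrow> b \<in> S \<Longrightarrow> 0 \<le> Q a b"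
    and weights: "\<And>a b. a \<in> S \<Longrightarrow> b \<in> S \<Longrightarrow> Q a b \<noteq> 0 \<Longrightarrow>
                    0 < R a b \<and> 0 < R b a \<and> 1 \<le> R a b * R b a"
  shows "(\<Sum>a\<in>S. \<Sum>b\<in>S. Q a b * (x a * x b)) \<le> (\<Sum>a\<in>S. x a ^ 2 * (\<Sum>b\<in>S. Q a b * R a b))"
proof -
  have "(\<Sum>a\<in>S. \<Sum>b\<in>S. Q a b * (x a * x b))
      \<le> (\<Sum>a\<in>S. \<Sum>b\<in>S. Q a b * R a b * x a ^ 2 / 2 + Q a b * R b a * x b ^ 2 / 2)"
  proof (intro sum_mono)
    fix a b assume ab: "a \<in> S" "b \<in> S"
    show "Q a b * (x a * x b) \<le> Q a b * R a b * x a ^ 2 / 2 + Q a b * R b a * x b ^ 2 / 2"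
    proof (cases "Q a b = 0")
      case False
      then have "2 * x a * x b \<le> R a b * x a ^ 2 + R b a * x b ^ 2"
        using weights[OF ab] by (intro two_mult_le_weighted_squares) auto
      then have "Q a b * (2 * x a * x b) \<le> Q a b * (R a b * x a ^ 2 + R b a * x b ^ 2)"
        using nonneg[OF ab] by (rule mult_left_mono)
      then show ?thesis by (simp add: algebra_simps)
    qed simp
  qed
  also have "\<dots> = (\<Sum>a\<in>S. \<Sum>b\<in>S. Q a b * R a b * x a ^ 2 / 2)
                 + (\<Sum>b\<in>S. \<Sum>a\<in>S. Q b a * R b a * x b ^ 2 / 2)"
  proof -
    have "(\<Sum>a\<in>S. \<Sum>b\<in>S. Q a b * R b a * x b ^ 2 / 2) = (\<Sum>b\<in>S. \<Sum>a\<in>S. Q b a * R b a * x b ^ 2 / 2)"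
      by (subst sum.swap) (simp add: sym cong: sum.cong)
    then show ?thesis by (simp add: sum.distrib)
  qed
  also have "\<dots> = (\<Sum>a\<in>S. \<Sum>b\<in>S. Q a b * R a b * x a ^ 2)"
    by (simp add: mult.assoc flip: sum.distrib)
  also have "\<dots> = (\<Sum>a\<in>S. x a ^ 2 * (\<Sum>b\<in>S. Q a b * R a b))"
    by (simp add: sum_distrib_left ac_simps)
  finally show ?thesis .
qed

lemma eigenvalue_norm_le_of_quadratic_form_bound:
  fixes A :: "complex mat"
  assumes A: "A \<in> carrier_mat n n" and ev: "eigenvalue A ev"
    and bound: "\<And>x. (\<And>i. 0 \<le> x i) \<Longrightarrow>
      (\<Sum>i<n. \<Sum>j<n. cmod (A $$ (i, j)) * (x i * x j)) \<le> c * (\<Sum>i<n. x i ^ 2)"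
  shows "cmod ev \<le> c"
proof -
  obtain v where v: "v \<in> carrier_vec n" "v \<noteq> 0\<^sub>v n" "A *\<^sub>v v = ev \<cdot>\<^sub>v v"
    using ev A unfolding eigenvalue_def eigenvector_def by auto
  define x where "x i = cmod (v $ i)" for i
  define s where "s = (\<Sum>i<n. x i ^ 2)"
  have Av: "(A *\<^sub>v v) $ i = (\<Sum>j<n. A $$ (i, j) * v $ j)" if "i < n" for i
    using that A v(1) by (auto simp: scalar_prod_def atLeast0LessThan)
  have "ev * complex_of_real s = (\<Sum>i<n. cnj (v $ i) * (A *\<^sub>v v) $ i)"
    unfolding s_def of_real_sum sum_distrib_left x_def complex_norm_square
    by (intro sum.cong refl) (use v(1,3) in auto)
  also have "\<dots> = (\<Sum>i<n. \<Sum>j<n. cnj (v $ i) * A $$ (i, j) * v $ j)"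
    by (simp add: Av sum_distrib_left mult.assoc)
  finally have quadratic_form: "ev * complex_of_real s = (\<Sum>i<n. \<Sum>j<n. cnj (v $ i) * A $$ (i, j) * v $ j)" .
  have "0 \<le> s" unfolding s_def by (simp add: sum_nonneg)
  then have "cmod ev * s = cmod (ev * complex_of_real s)" by (simp add: norm_mult)
  also have "\<dots> \<le> (\<Sum>i<n. \<Sum>j<n. cmod (cnj (v $ i) * A $$ (i, j) * v $ j))"
    unfolding quadratic_form by (intro order_trans[OF norm_sum] sum_mono norm_sum)
  also have "\<dots> = (\<Sum>i<n. \<Sum>j<n. cmod (A $$ (i, j)) * (x i * x j))"
    by (simp add: norm_mult x_def ac_simps)
  also have "\<dots> \<le> c * s"
    unfolding s_def by (rule bound) (simp add: x_def)
  finally have "cmod ev * s \<le> c * s" .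
  moreover obtain i where "i < n" "v $ i \<noteq> 0"
    using v(1,2) by (metis carrier_vecD eq_vecI index_zero_vec(1,2))
  then have "0 < s"
    unfolding s_def by (intro sum_pos2[of _ i]) (auto simp: x_def)
  ultimately show ?thesis by (simp add: mult_le_cancel_right_pos)
qed

lemma lambda_max_le:
  assumes "A \<in> carrier_mat n n" "0 < n" "\<And>ev. eigenvalue A ev \<Longrightarrow> Re ev \<le> c"
  shows "lambda_max A \<le> c"
proof -
  have "{ev. eigenvalue A ev} = spectrum A" by (simp add: spectrum_def)
  then have "finite (Re ` {ev. eigenvalue A ev})" "Re ` {ev. eigenvalue A ev} \<noteq> {}"
    using card_finite_spectrum(1)[OF assms(1)] spectrum_non_empty[OF assms(1,2)] by auto
  then show ?thesis unfolding lambda_max_def using assms(3) by auto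
qed

lemma less_two_power_iff_bits: "(a::nat) < 2 ^ N \<longleftrightarrow> (\<forall>i. bit a i \<longrightarrow> i < N)"
proof -
  have "a < 2 ^ N \<longleftrightarrow> take_bit N a = a" by (simp add: take_bit_nat_eq_self_iff)
  also have "\<dots> \<longleftrightarrow> (\<forall>i. bit a i \<longrightarrow> i < N)"
    by (auto simp: bit_eq_iff[of "take_bit N a" a] bit_take_bit_iff)
  finally show ?thesis .
qed

lemma qubits_eq_imp_eq:
  assumes "a < 2 ^ N" "b < 2 ^ N" "\<And>j. j \<in> {1..N} \<Longrightarrow> qubit a j = qubit b j"
  shows "a = b"
proof (rule bit_eqI)
  fix i
  show "bit a i = bit b i"
  proof (cases "i < N")
    case True
    then show ?thesis using assms(3)[of "Suc i"] by (simp add: qubit_def)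
  next
    case False
    then show ?thesis using assms(1,2) by (auto simp: less_two_power_iff_bits)
  qed
qed

definition flip_qubits :: "nat \<Rightarrow> nat \<Rightarrow> nat \<Rightarrow> nat" where
  "flip_qubits k l a = flip_bit (k - 1) (flip_bit (l - 1) a)"

lemma qubit_flip_qubits:
  assumes "1 \<le> k" "1 \<le> l" "k \<noteq> l" "1 \<le> j"
  shows "qubit (flip_qubits k l a) j = (if j = k \<or> j = l then \<not> qubit a j else qubit a j)"
  using assms unfolding qubit_def flip_qubits_def by (auto simp: bit_flip_bit_iff)

lemma flip_qubits_less_two_power:
  assumes "a < 2 ^ N" "k \<in> {1..N}" "l \<in> {1..N}"
  shows "flip_qubits k l a < 2 ^ N"
  using assms unfolding flip_qubits_def less_two_power_iff_bits by (auto simp: bit_flip_bit_iff)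

lemma flip_qubits_flip_qubits: "flip_qubits k l (flip_qubits k l a) = a"
  unfolding flip_qubits_def by (rule bit_eqI) (auto simp: bit_flip_bit_iff)

lemma flip_qubits_commute: "flip_qubits k l a = flip_qubits l k a"
  unfolding flip_qubits_def by (rule bit_eqI) (auto simp: bit_flip_bit_iff)

lemma flip_qubits_neq:
  assumes "1 \<le> k" "1 \<le> l" "k \<noteq> l"
  shows "flip_qubits k l a \<noteq> a"
  using qubit_flip_qubits[OF assms, of k a] assms(1) by auto

definition pair_parity :: "(nat \<times> nat \<Rightarrow> bool \<times> bool) \<Rightarrow> nat \<Rightarrow> nat \<Rightarrow> bool" where
  "pair_parity m k j = snd (m (min k j, max k j))"

text \<open>The basis state \<open>a\<close> lies in the support of the Bell state that \<open>m\<close> puts on the pair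
  \<open>{k, j}\<close>.\<close>
definition parity_matches :: "(nat \<times> nat \<Rightarrow> bool \<times> bool) \<Rightarrow> nat \<Rightarrow> nat \<Rightarrow> nat \<Rightarrow> bool" where
  "parity_matches m a k j \<longleftrightarrow> (qubit a j \<longleftrightarrow> qubit a k \<noteq> pair_parity m k j)"

definition match_degree :: "nat \<Rightarrow> (nat \<times> nat \<Rightarrow> bool \<times> bool) \<Rightarrow> nat \<Rightarrow> nat \<Rightarrow> nat" where
  "match_degree N m a k = card {j \<in> {1..N} - {k}. parity_matches m a k j}"

lemma parity_matches_commute: "parity_matches m a k j = parity_matches m a j k"
  unfolding parity_matches_def pair_parity_def by (auto simp: min.commute max.commute)

lemma parity_matches_flip_qubits:
  assumes "1 \<le> k" "1 \<le> l" "k \<noteq> l" "1 \<le> j" "j \<noteq> k"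
  shows "parity_matches m (flip_qubits k l a) k j =
    (if j = l then parity_matches m a k j else \<not> parity_matches m a k j)"
  using assms unfolding parity_matches_def by (auto simp: qubit_flip_qubits)

lemma match_degree_le: "match_degree N m a k \<le> N"
proof -
  have "match_degree N m a k \<le> card {1..N}" unfolding match_degree_def by (rule card_mono) auto
  then show ?thesis by simp
qed

lemma match_degree_pos:
  assumes "l \<in> {1..N}" "k \<noteq> l" "parity_matches m a k l"
  shows "0 < match_degree N m a k"
  unfolding match_degree_def using assms by (subst card_gt_0_iff) auto

text \<open>Flipping both qubits of a matched pair \<open>{k, l}\<close> keeps that pair matched and toggles every
  other pair at \<open>k\<close>.\<close>
lemma match_degree_flip_qubits:
  assumes "k \<in> {1..N}" "l \<in> {1..N}" "k \<noteq> l" "parity_matches m a k l"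
  shows "match_degree N m (flip_qubits k l a) k = N - match_degree N m a k"
proof -
  define S where "S = {1..N} - {k}"
  define M where "M = {j \<in> S. parity_matches m a k j}"
  have "finite S" "M \<subseteq> S" "l \<in> M" "card S = N - 1"
    using assms unfolding M_def S_def by auto
  then have "finite M" "card M \<ge> 1" "card M \<le> N - 1"
    using finite_subset card_mono card_0_eq[of M] by fastforce+
  have "{j \<in> S. parity_matches m (flip_qubits k l a) k j} = S - (M - {l})"
    using assms unfolding M_def S_def by (auto simp: parity_matches_flip_qubits split: if_splits)
  also have "card \<dots> = card S - (card M - 1)"
    using \<open>finite S\<close> \<open>M \<subseteq> S\<close> \<open>l \<in> M\<close> by (subst card_Diff_subset) (auto intro: finite_subset)
  also have "\<dots> = N - card M"
    using \<open>card S = N - 1\<close> \<open>card M \<ge> 1\<close> \<open>card M \<le> N - 1\<close> by arith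
  finally show ?thesis unfolding match_degree_def S_def M_def .
qed

lemma bell_amp_nonzero_imp: "bell_amp x y u v \<noteq> 0 \<Longrightarrow> v \<longleftrightarrow> u \<noteq> y"
  unfolding bell_amp_def by (auto split: if_splits)

lemma norm_bell_amp_le: "cmod (bell_amp x y u v) \<le> 1 / sqrt 2"
  unfolding bell_amp_def by (auto simp: norm_divide)

lemma norm_bell_proj_entry_le: "cmod (bell_proj_entry N k l xy a b) \<le> 1 / 2"
proof -
  let ?amp = "\<lambda>c. bell_amp (fst xy) (snd xy) (qubit c k) (qubit c l)"
  have "cmod (?amp a * cnj (?amp b)) \<le> (1 / sqrt 2) * (1 / sqrt 2)"
    unfolding norm_mult complex_mod_cnj by (rule mult_mono) (auto simp: norm_bell_amp_le)
  also have "\<dots> = 1 / 2" by simp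
  finally show ?thesis unfolding bell_proj_entry_def by auto
qed

lemma agree_off_pair_imp_eq_or_flip_qubits:
  assumes "k \<in> {1..N}" "l \<in> {1..N}" "k \<noteq> l" "a < 2 ^ N" "b < 2 ^ N"
    and agree: "\<forall>j \<in> {1..N} - {k, l}. qubit a j = qubit b j"
    and parity: "(qubit a k = qubit b k) = (qubit a l = qubit b l)"
  shows "b = a \<or> b = flip_qubits k l a"
proof (cases "qubit a k = qubit b k")
  case True
  then have "a = b" using assms by (intro qubits_eq_imp_eq[of a N b]) auto
  then show ?thesis by simp
next
  case False
  then have "flip_qubits k l a = b"
    using assms flip_qubits_less_two_power[of a N k l]
    by (intro qubits_eq_imp_eq[of _ N b]) (auto simp: qubit_flip_qubits)
  then show ?thesis by simp
qed

lemma bell_proj_entry_nonzero_imp: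
  assumes kl: "(k, l) \<in> enc_set N" and "a < 2 ^ N" "b < 2 ^ N"
    and nonzero: "bell_proj_entry N k l (m (k, l)) a b \<noteq> 0"
  shows "parity_matches m a k l \<and> (b = a \<or> b = flip_qubits k l a)"
proof -
  have k: "k \<in> {1..N}" "l \<in> {1..N}" "k < l" using kl unfolding enc_set_def by auto
  then have parity: "pair_parity m k l = snd (m (k, l))" unfolding pair_parity_def by simp
  from nonzero have agree: "\<forall>j \<in> {1..N} - {k, l}. qubit a j = qubit b j"
    and "bell_amp (fst (m (k, l))) (snd (m (k, l))) (qubit a k) (qubit a l) \<noteq> 0"
        "bell_amp (fst (m (k, l))) (snd (m (k, l))) (qubit b k) (qubit b l) \<noteq> 0"
    unfolding bell_proj_entry_def by (auto split: if_splits)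
  then have "parity_matches m a k l" "parity_matches m b k l"
    unfolding parity_matches_def parity by (auto dest: bell_amp_nonzero_imp)
  moreover have "b = a \<or> b = flip_qubits k l a"
    using k assms(2,3) agree calculation unfolding parity_matches_def
    by (intro agree_off_pair_imp_eq_or_flip_qubits) auto
  ultimately show ?thesis by blast
qed

definition entry_majorant :: "(nat \<times> nat \<Rightarrow> bool \<times> bool) \<Rightarrow> nat \<times> nat \<Rightarrow> nat \<Rightarrow> nat \<Rightarrow> real" where
  "entry_majorant m = (\<lambda>(k, l) a b.
     if parity_matches m a k l \<and> (b = a \<or> b = flip_qubits k l a) then 1 / 2 else 0)"

definition schur_weight :: "nat \<Rightarrow> (nat \<times> nat \<Rightarrow> bool \<times> bool) \<Rightarrow> nat \<times> nat \<Rightarrow> nat \<Rightarrow> nat \<Rightarrow> real" where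
  "schur_weight N m = (\<lambda>(k, l) a b.
     (real (match_degree N m b k) / real (match_degree N m a k)
      + real (match_degree N m b l) / real (match_degree N m a l)) / 2)"

lemma norm_bell_proj_entry_le_majorant:
  assumes "(k, l) \<in> enc_set N" "a < 2 ^ N" "b < 2 ^ N"
  shows "cmod (bell_proj_entry N k l (m (k, l)) a b) \<le> entry_majorant m (k, l) a b"
  using bell_proj_entry_nonzero_imp[OF assms] norm_bell_proj_entry_le
  unfolding entry_majorant_def by fastforce

lemma entry_majorant_commute:
  assumes "(k, l) \<in> enc_set N"
  shows "entry_majorant m (k, l) a b = entry_majorant m (k, l) b a"
proof -
  have "1 \<le> k" "1 \<le> l" "k \<noteq> l" using assms unfolding enc_set_def by auto
  then have "parity_matches m a k l \<and> b = flip_qubits k l a \<longleftrightarrow>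
      parity_matches m b k l \<and> a = flip_qubits k l b"
    using parity_matches_flip_qubits[of k l l m] flip_qubits_flip_qubits by metis
  then show ?thesis unfolding entry_majorant_def by auto
qed

lemma match_degrees_pos:
  assumes "(k, l) \<in> enc_set N" "parity_matches m a k l"
  shows "0 < match_degree N m a k" "0 < match_degree N m a l"
  using assms match_degree_pos[of l N k m a] match_degree_pos[of k N l m a]
  by (auto simp: enc_set_def parity_matches_commute)

lemma schur_weight_mult_ge_1:
  assumes kl: "(k, l) \<in> enc_set N" and nonzero: "entry_majorant m (k, l) a b \<noteq> 0"
  shows "0 < schur_weight N m (k, l) a b" "0 < schur_weight N m (k, l) b a"
    "1 \<le> schur_weight N m (k, l) a b * schur_weight N m (k, l) b a"
proof -
  have "1 \<le> k" "1 \<le> l" "k \<noteq> l" using kl unfolding enc_set_def by auto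
  have "parity_matches m a k l" and "b = a \<or> b = flip_qubits k l a"
    using nonzero unfolding entry_majorant_def by (auto split: if_splits)
  then have "parity_matches m b k l"
    using parity_matches_flip_qubits[of k l l m a] \<open>1 \<le> k\<close> \<open>1 \<le> l\<close> \<open>k \<noteq> l\<close> by auto
  define \<alpha> where "\<alpha> = real (match_degree N m b k) / real (match_degree N m a k)"
  define \<beta> where "\<beta> = real (match_degree N m b l) / real (match_degree N m a l)"
  have "0 < \<alpha>" "0 < \<beta>"
    unfolding \<alpha>_def \<beta>_def
    using match_degrees_pos[OF kl \<open>parity_matches m a k l\<close>]
      match_degrees_pos[OF kl \<open>parity_matches m b k l\<close>] by auto
  have Rab: "schur_weight N m (k, l) a b = (\<alpha> + \<beta>) / 2"
    and Rba: "schur_weight N m (k, l) b a = (inverse \<alpha> + inverse \<beta>) / 2"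
    unfolding \<alpha>_def \<beta>_def schur_weight_def by simp_all
  show "0 < schur_weight N m (k, l) a b" "0 < schur_weight N m (k, l) b a"
    unfolding Rab Rba using \<open>0 < \<alpha>\<close> \<open>0 < \<beta>\<close> by (simp_all add: add_pos_pos)
  have "(\<alpha> + \<beta>) / 2 * ((inverse \<alpha> + inverse \<beta>) / 2) = (\<alpha> + \<beta>) * (inverse \<alpha> + inverse \<beta>) / 4"
    by simp
  then show "1 \<le> schur_weight N m (k, l) a b * schur_weight N m (k, l) b a"
    unfolding Rab Rba using four_le_add_mult_inverse_add[OF \<open>0 < \<alpha>\<close> \<open>0 < \<beta>\<close>] by linarith
qed

lemma majorant_quadratic_form_le:
  assumes "p \<in> enc_set N"
  shows "(\<Sum>a<2 ^ N. \<Sum>b<2 ^ N. entry_majorant m p a b * (x a * x b))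
    \<le> (\<Sum>a<2 ^ N. x a ^ 2 * (\<Sum>b<2 ^ N. entry_majorant m p a b * schur_weight N m p a b))"
proof -
  from assms obtain k l where p: "p = (k, l)" and kl: "(k, l) \<in> enc_set N" by (cases p) auto
  show ?thesis unfolding p
  proof (rule quadratic_form_le_weighted_row_sums)
    fix a b
    show "entry_majorant m (k, l) a b = entry_majorant m (k, l) b a"
      by (rule entry_majorant_commute[OF kl])
    show "0 \<le> entry_majorant m (k, l) a b" by (simp add: entry_majorant_def)
    assume "entry_majorant m (k, l) a b \<noteq> 0"
    then show "0 < schur_weight N m (k, l) a b \<and> 0 < schur_weight N m (k, l) b a
        \<and> 1 \<le> schur_weight N m (k, l) a b * schur_weight N m (k, l) b a"
      using schur_weight_mult_ge_1[OF kl] by blast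
  qed simp
qed

lemma majorant_weighted_row_sum:
  assumes kl: "(k, l) \<in> enc_set N" and a: "a < 2 ^ N"
  shows "(\<Sum>b<2 ^ N. entry_majorant m (k, l) a b * schur_weight N m (k, l) a b) =
    (if parity_matches m a k l
     then real N / 4 * (1 / real (match_degree N m a k) + 1 / real (match_degree N m a l))
     else 0)"
proof (cases "parity_matches m a k l")
  case False
  then show ?thesis by (simp add: entry_majorant_def)
next
  case True
  have k: "k \<in> {1..N}" "l \<in> {1..N}" "k \<noteq> l" using kl unfolding enc_set_def by auto
  let ?R = "schur_weight N m (k, l) a" and ?a' = "flip_qubits k l a"
  let ?dk = "match_degree N m a k" and ?dl = "match_degree N m a l"
  have "?a' \<noteq> a" using k by (intro flip_qubits_neq) auto
  then have "entry_majorant m (k, l) a b * ?R b =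
      (if b = a then ?R a / 2 else 0) + (if b = ?a' then ?R ?a' / 2 else 0)" for b
    using True unfolding entry_majorant_def by auto
  then have "(\<Sum>b<2 ^ N. entry_majorant m (k, l) a b * ?R b) = ?R a / 2 + ?R ?a' / 2"
    using a flip_qubits_less_two_power[OF a k(1,2)] by (simp add: sum.distrib sum.delta)
  moreover have "0 < ?dk" "0 < ?dl" using match_degrees_pos[OF kl True] by auto
  then have "?R a = 1" by (simp add: schur_weight_def)
  moreover have "match_degree N m ?a' k = N - ?dk" "match_degree N m ?a' l = N - ?dl"
    using match_degree_flip_qubits[OF k True]
      match_degree_flip_qubits[OF k(2,1) _ True[unfolded parity_matches_commute[of m a k l]]] k(3)
    by (auto simp: flip_qubits_commute)
  then have "?R ?a' = ((real N - ?dk) / ?dk + (real N - ?dl) / ?dl) / 2"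
    using match_degree_le[of N m a k] match_degree_le[of N m a l]
    by (simp add: schur_weight_def of_nat_diff)
  ultimately show ?thesis
    using True \<open>0 < ?dk\<close> \<open>0 < ?dl\<close> by (simp add: field_simps)
qed

lemma sum_enc_set_both_orders:
  fixes F :: "nat \<Rightarrow> nat \<Rightarrow> 'a::comm_monoid_add"
  shows "(\<Sum>(k, l)\<in>enc_set N. F k l + F l k) = (\<Sum>k\<in>{1..N}. \<Sum>j\<in>{1..N} - {k}. F k j)"
proof -
  have "finite (enc_set N)"
    by (rule finite_subset[of _ "{1..N} \<times> {1..N}"]) (auto simp: enc_set_def)
  have pairs: "Sigma {1..N} (\<lambda>k. {1..N} - {k}) = enc_set N \<union> prod.swap ` enc_set N"
    unfolding enc_set_def by (auto simp: image_iff)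
  have "(\<Sum>k\<in>{1..N}. \<Sum>j\<in>{1..N} - {k}. F k j) = (\<Sum>(k, j)\<in>Sigma {1..N} (\<lambda>k. {1..N} - {k}). F k j)"
    by (rule sum.Sigma) auto
  also have "\<dots> = (\<Sum>(k, j)\<in>enc_set N. F k j) + (\<Sum>(k, j)\<in>prod.swap ` enc_set N. F k j)"
    unfolding pairs using \<open>finite (enc_set N)\<close>
    by (intro sum.union_disjoint) (auto simp: enc_set_def)
  also have "(\<Sum>(k, j)\<in>prod.swap ` enc_set N. F k j) = (\<Sum>(k, l)\<in>enc_set N. F l k)"
    by (subst sum.reindex) (auto simp: inj_on_def)
  finally show ?thesis by (simp add: sum.distrib case_prod_unfold)
qed

lemma sum_divide_match_degree_le:
  assumes "0 \<le> c"
  shows "(\<Sum>j\<in>{1..N} - {k}. if parity_matches m a k j then c / real (match_degree N m a k) else 0) \<le> c"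
proof -
  have "(\<Sum>j\<in>{1..N} - {k}. if parity_matches m a k j then c / real (match_degree N m a k) else 0)
      = real (match_degree N m a k) * (c / real (match_degree N m a k))"
    unfolding match_degree_def by (simp add: sum.inter_filter[symmetric])
  also have "\<dots> \<le> c" using assms by (cases "match_degree N m a k = 0") auto
  finally show ?thesis .
qed

lemma majorant_weighted_row_sums_le:
  assumes "a < 2 ^ N"
  shows "(\<Sum>p\<in>enc_set N. \<Sum>b<2 ^ N. entry_majorant m p a b * schur_weight N m p a b)
    \<le> real N ^ 2 / 4"
proof -
  define G where
    "G k j = (if parity_matches m a k j then real N / 4 / real (match_degree N m a k) else 0)" for k j
  have "(\<Sum>p\<in>enc_set N. \<Sum>b<2 ^ N. entry_majorant m p a b * schur_weight N m p a b)
      = (\<Sum>(k, l)\<in>enc_set N. G k l + G l k)"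
    using majorant_weighted_row_sum[OF _ assms]
    by (intro sum.cong refl) (auto simp: G_def parity_matches_commute distrib_left)
  also have "\<dots> = (\<Sum>k\<in>{1..N}. \<Sum>j\<in>{1..N} - {k}. G k j)"
    by (rule sum_enc_set_both_orders)
  also have "\<dots> \<le> (\<Sum>k\<in>{1..N}. real N / 4)"
    unfolding G_def by (intro sum_mono sum_divide_match_degree_le) simp
  also have "\<dots> = real N ^ 2 / 4" by (simp add: power2_eq_square)
  finally show ?thesis .
qed

lemma sigma_m_carrier: "sigma_m N m \<in> carrier_mat (2 ^ N) (2 ^ N)"
  by (simp add: sigma_m_def)

lemma sigma_m_quadratic_form_le:
  fixes x :: "nat \<Rightarrow> real"
  assumes x: "\<And>a. 0 \<le> x a"
  shows "(\<Sum>a<2 ^ N. \<Sum>b<2 ^ N. cmod (sigma_m N m $$ (a, b)) * (x a * x b))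
    \<le> real N ^ 2 / 4 * (\<Sum>a<2 ^ N. x a ^ 2)"
proof -
  let ?S = "{..<2 ^ N :: nat}" and ?E = "enc_set N"
  let ?Q = "entry_majorant m" and ?R = "schur_weight N m"
  have "cmod (sigma_m N m $$ (a, b)) \<le> (\<Sum>p\<in>?E. ?Q p a b)" if "a < 2 ^ N" "b < 2 ^ N" for a b
    using that unfolding sigma_m_def
    by (auto intro!: order_trans[OF norm_sum] sum_mono norm_bell_proj_entry_le_majorant)
  then have "(\<Sum>a\<in>?S. \<Sum>b\<in>?S. cmod (sigma_m N m $$ (a, b)) * (x a * x b))
      \<le> (\<Sum>a\<in>?S. \<Sum>b\<in>?S. (\<Sum>p\<in>?E. ?Q p a b) * (x a * x b))"
    using x by (intro sum_mono mult_right_mono) auto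
  also have "\<dots> = (\<Sum>a\<in>?S. \<Sum>b\<in>?S. \<Sum>p\<in>?E. ?Q p a b * (x a * x b))"
    by (simp add: sum_distrib_right)
  also have "\<dots> = (\<Sum>p\<in>?E. \<Sum>a\<in>?S. \<Sum>b\<in>?S. ?Q p a b * (x a * x b))"
    by (simp only: sum.swap[of _ ?E ?S])
  also have "\<dots> \<le> (\<Sum>p\<in>?E. \<Sum>a\<in>?S. x a ^ 2 * (\<Sum>b\<in>?S. ?Q p a b * ?R p a b))"
    by (intro sum_mono majorant_quadratic_form_le)
  also have "\<dots> = (\<Sum>a\<in>?S. x a ^ 2 * (\<Sum>p\<in>?E. \<Sum>b\<in>?S. ?Q p a b * ?R p a b))"
    by (simp only: sum_distrib_left sum.swap[of _ ?E ?S])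
  also have "\<dots> \<le> (\<Sum>a\<in>?S. x a ^ 2 * (real N ^ 2 / 4))"
    by (intro sum_mono mult_left_mono majorant_weighted_row_sums_le) auto
  also have "\<dots> = real N ^ 2 / 4 * (\<Sum>a\<in>?S. x a ^ 2)"
    by (simp add: sum_distrib_left mult.commute)
  finally show ?thesis .
qed

theorem lemma3:
  fixes N :: nat and m :: "nat \<times> nat \<Rightarrow> bool \<times> bool"
  assumes "N \<ge> 2"
  shows "lambda_max (sigma_m N m) \<le> real N ^ 2 / 4 + real N / 4 - 1 / 2"
proof -
  have Re_le: "Re ev \<le> real N ^ 2 / 4" if "eigenvalue (sigma_m N m) ev" for ev
  proof -
    have "cmod ev \<le> real N ^ 2 / 4"
      using sigma_m_carrier that sigma_m_quadratic_form_le
      by (rule eigenvalue_norm_le_of_quadratic_form_bound)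
    then show ?thesis using complex_Re_le_cmod[of ev] by linarith
  qed
  have "lambda_max (sigma_m N m) \<le> real N ^ 2 / 4"
    by (rule lambda_max_le[OF sigma_m_carrier _ Re_le]) simp
  moreover have "2 \<le> real N" using assms by simp
  ultimately show ?thesis by linarith
qed

end
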